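(* Let $\Gamma\subset\mathbb{R}^2$ be a simple closed curve such that every set of $6$ points of $\Gamma$ is in c.s.c. position. If $\ell$ and $\ell'$ are two distinct parallel supporting lines of $\Gamma$, then $\ell\cap\Gamma$ and $\ell'\cap\Gamma$ are segments (possibly degenerate, i.e. single points, regarded as segments of length zero) of equal length.
   Context: A set of points in $\mathbb{R}^2$ is in c.s.c. position if it is contained in the boundary of a centrally symmetric convex body. Under the hypothesis, $\Gamma$ is the boundary of a convex body. A supporting line of $\Gamma$ is a line meeting $\Gamma$ such that $\Gamma$ lies in one of the closed half-planes it determines. *)

theory Defs
  imports "HOL-Analysis.Analysis"
begin

definition simple_closed_curve :: "(real^2) set \<Rightarrow> bool" where
  "simple_closed_curve \<Gamma> \<longleftrightarrow>
     (\<exists>g. simple_path g \<and> pathfinish g = pathstart g \<and> path_image g = \<Gamma>)"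

definition cs_convex_body :: "(real^2) set \<Rightarrow> bool" where
  "cs_convex_body K \<longleftrightarrow> compact K \<and> convex K \<and> interior K \<noteq> {} \<and>
     (\<exists>c. \<forall>x\<in>K. 2 *\<^sub>R c - x \<in> K)"

definition csc_position :: "(real^2) set \<Rightarrow> bool" where
  "csc_position S \<longleftrightarrow> (\<exists>K. cs_convex_body K \<and> S \<subseteq> frontier K)"

definition is_line :: "(real^2) set \<Rightarrow> bool" where
  "is_line L \<longleftrightarrow> (\<exists>u c. u \<noteq> 0 \<and> L = {x. inner u x = c})"

definition parallel_lines :: "(real^2) set \<Rightarrow> (real^2) set \<Rightarrow> bool" where
  "parallel_lines L L' \<longleftrightarrow>
     (\<exists>u c c'. u \<noteq> 0 \<and> L = {x. inner u x = c} \<and> L' = {x. inner u x = c'})"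

definition supporting_line :: "(real^2) set \<Rightarrow> (real^2) set \<Rightarrow> bool" where
  "supporting_line \<Gamma> L \<longleftrightarrow>
     (\<exists>u c. u \<noteq> 0 \<and> L = {x. inner u x = c} \<and> L \<inter> \<Gamma> \<noteq> {} \<and>
        (\<Gamma> \<subseteq> {x. inner u x \<le> c} \<or> \<Gamma> \<subseteq> {x. inner u x \<ge> c}))"

end

theory Submission
  imports Defs
begin

text \<open>
  Let \<open>u \<bullet> x = m\<close> and \<open>u \<bullet> x = M\<close> be the two supporting lines, \<open>m < M\<close>. Every hypothesis
  on \<Gamma> is applied to at most six of its points, completed to six points arbitrarily.

  Each line meets \<Gamma> in a segment: if \<open>r\<close> lay on the line between two points \<open>a, b\<close> of \<Gamma>
  but not on \<Gamma>, both arcs of \<Gamma> from \<open>a\<close> to \<open>b\<close> would cross the normal through \<open>r\<close> below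
  the line, and the upper crossing point would lie inside the triangle spanned by \<open>a\<close>, \<open>b\<close>
  and the lower one, which is impossible for four points on the boundary of a convex body.

  Suppose the bottom chord \<open>[a', b']\<close> were shorter than the top chord \<open>[a, b]\<close>. Just above
  the bottom, \<Gamma> meets a level line in two points \<open>x\<^sub>1, x\<^sub>3\<close> close to \<open>[a', b']\<close>, hence at
  distance \<open>< |a - b|\<close>. A centrally symmetric convex body \<open>K\<close> with \<open>a, b, (a + b)/2, a', x\<^sub>1, x\<^sub>3\<close>
  on its boundary has a flat top at level \<open>M\<close>, so its reflected image of \<open>[a, b]\<close> lies at
  level \<open>\<le> m\<close>, and by convexity \<open>K\<close> contains a translate of \<open>[a, b]\<close> on the level line of
  \<open>x\<^sub>1, x\<^sub>3\<close>. One of \<open>x\<^sub>1, x\<^sub>3\<close> then lies strictly inside a horizontal chord of \<open>K\<close>, although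
  \<open>K\<close> has points strictly above and below it. By symmetry the chords have equal length.
\<close>

lemma inner_vec2: "(x::real^2) \<bullet> y = x$1 * y$1 + x$2 * y$2"
  by (simp add: inner_vec_def sum_2)

lemma orthogonal_2_parallel:
  fixes u w d :: "real^2"
  assumes "u \<noteq> 0" "d \<noteq> 0" "u \<bullet> d = 0" "w \<bullet> d = 0"
  shows "w = ((w \<bullet> u) / (u \<bullet> u)) *\<^sub>R u"
proof -
  have e: "u$1*d$1 + u$2*d$2 = 0" "w$1*d$1 + w$2*d$2 = 0" using assms by (simp_all add: inner_vec2)
  have "d$1 * (u$1*w$2 - u$2*w$1) = 0" "d$2 * (u$1*w$2 - u$2*w$1) = 0"
    using e by algebra+
  moreover have "d$1 \<noteq> 0 \<or> d$2 \<noteq> 0" using assms(2) by (metis exhaust_2 vec_eq_iff zero_index)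
  ultimately have det: "u$1*w$2 = u$2*w$1" by auto
  have "u \<bullet> u \<noteq> 0" using assms(1) by simp
  moreover have "w$i * (u \<bullet> u) = (w \<bullet> u) * u$i" for i :: 2
    using det exhaust_2[of i] by (auto simp: inner_vec2 algebra_simps)
  ultimately show ?thesis by (simp add: vec_eq_iff field_simps)
qed

lemma vec2_eq_if_inner_eq:
  fixes u v x y :: "real^2"
  assumes "u \<noteq> 0" "v \<noteq> 0" "u \<bullet> v = 0" "u \<bullet> x = u \<bullet> y" "v \<bullet> x = v \<bullet> y"
  shows "x = y"
proof (rule ccontr)
  assume "x \<noteq> y"
  then have "v = ((v \<bullet> u) / (u \<bullet> u)) *\<^sub>R u"
    by (intro orthogonal_2_parallel[of u "x - y"]) (use assms in \<open>auto simp: inner_diff_right\<close>)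
  then have "u \<bullet> v = ((v \<bullet> u) / (u \<bullet> u)) * (u \<bullet> u)" by (metis inner_scaleR_right)
  then have "v \<bullet> u = 0" using assms(1,3) by simp
  then show False using \<open>v = _\<close> assms(2) by simp
qed

lemma exists_orthogonal_2:
  fixes u :: "real^2"
  assumes "u \<noteq> 0"
  obtains v where "v \<noteq> 0" "u \<bullet> v = 0"
proof
  define v :: "real^2" where "v = vector [- u$2, u$1]"
  show "u \<bullet> v = 0" by (simp add: inner_vec2 v_def)
  show "v \<noteq> 0"
  proof
    assume "v = 0"
    then have "v$1 = 0" "v$2 = 0" by simp_all
    then have "u = 0" unfolding v_def by (simp add: vec_eq_iff forall_2)
    with assms show False by simp
  qed
qed

section \<open>Boundary points of convex bodies\<close>

lemma convex_comb_eq_max: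
  fixes A B C P :: real
  assumes "\<alpha> > 0" "\<beta> > 0" "\<gamma> \<ge> 0" "\<alpha> + \<beta> + \<gamma> = 1"
    "P = \<alpha> * A + \<beta> * B + \<gamma> * C" "A \<le> P" "B \<le> P" "C \<le> P"
  shows "A = P \<and> B = P"
proof -
  have "\<alpha> * (P - A) + \<beta> * (P - B) + \<gamma> * (P - C) = (\<alpha> + \<beta> + \<gamma>) * P - (\<alpha> * A + \<beta> * B + \<gamma> * C)"
    by (simp add: algebra_simps)
  also have "\<dots> = 0" using assms(4,5) by simp
  finally have "\<alpha> * (P - A) + \<beta> * (P - B) + \<gamma> * (P - C) = 0" .
  moreover have "\<alpha> * (P - A) \<ge> 0" "\<beta> * (P - B) \<ge> 0" "\<gamma> * (P - C) \<ge> 0"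
    using assms by auto
  ultimately have "\<alpha> * (P - A) = 0" "\<beta> * (P - B) = 0" by linarith+
  then show ?thesis using assms(1,2) by auto
qed

lemma cs_convex_body_convex_closed:
  assumes "cs_convex_body K"
  shows "convex K" "closed K" "interior K \<noteq> {}"
  using assms unfolding cs_convex_body_def by (auto intro: compact_imp_closed)

lemma convex_frontier_supporting:
  fixes K :: "'a::euclidean_space set"
  assumes "convex K" "interior K \<noteq> {}" "p \<in> frontier K"
  obtains w where "w \<noteq> 0" "\<And>y. y \<in> K \<Longrightarrow> w \<bullet> y \<le> w \<bullet> p"
proof -
  have "rel_interior K = interior K" using assms(1,2) rel_interior_nonempty_interior by blast
  then have "p \<in> closure K" "p \<notin> rel_interior K" using assms(3) unfolding frontier_def by auto
  then obtain a where "a \<noteq> 0" "\<And>y. y \<in> closure K \<Longrightarrow> a \<bullet> p \<le> a \<bullet> y"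
    using supporting_hyperplane_relative_frontier[OF assms(1)] by metis
  then show ?thesis using that[of "-a"] closure_subset by force
qed

text \<open>A supporting functional at \<open>p\<close> is constant on the chord, so in the plane it is a multiple
  of \<open>u\<close>.\<close>

lemma frontier_open_chord_supporting:
  fixes u q1 q2 p :: "real^2"
  assumes K: "convex K" "interior K \<noteq> {}" "p \<in> frontier K" "q1 \<in> K" "q2 \<in> K"
    and p: "p = (1 - \<mu>) *\<^sub>R q1 + \<mu> *\<^sub>R q2" "0 < \<mu>" "\<mu> < 1"
    and u: "u \<noteq> 0" "u \<bullet> q1 = u \<bullet> q2" "q1 \<noteq> q2"
  shows "(\<forall>y\<in>K. u \<bullet> y \<le> u \<bullet> p) \<or> (\<forall>y\<in>K. u \<bullet> y \<ge> u \<bullet> p)"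
proof -
  obtain w where w: "w \<noteq> 0" "\<And>y. y \<in> K \<Longrightarrow> w \<bullet> y \<le> w \<bullet> p"
    using convex_frontier_supporting K(1-3) by blast
  have "w \<bullet> p = (1 - \<mu>) * (w \<bullet> q1) + \<mu> * (w \<bullet> q2) + 0 * (w \<bullet> q1)"
    using p(1) by (simp add: inner_add_right)
  then have "w \<bullet> q1 = w \<bullet> p \<and> w \<bullet> q2 = w \<bullet> p"
    by (rule convex_comb_eq_max[rotated 4]) (use w(2) K(4,5) p(2,3) in simp_all)
  then have "w \<bullet> (q2 - q1) = 0" by (auto simp: inner_diff_right)
  then obtain k where "w = k *\<^sub>R u"
    using orthogonal_2_parallel[OF u(1)] u by (metis eq_iff_diff_eq_0 inner_diff_right)
  then have "\<forall>y\<in>K. k * (u \<bullet> y) \<le> k * (u \<bullet> p)" and "k \<noteq> 0" using w by auto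
  then show ?thesis
    by (cases "k > 0") (auto simp: mult_le_cancel_left)
qed

lemma frontier_not_crossing_chord:
  fixes u d P y1 y2 :: "real^2"
  assumes K: "convex K" "interior K \<noteq> {}" and u: "u \<noteq> 0" and d: "d \<noteq> 0" "u \<bullet> d = 0"
    and p: "P + t *\<^sub>R d \<in> frontier K" and q: "P + r1 *\<^sub>R d \<in> K" "P + r2 *\<^sub>R d \<in> K"
    and r: "r1 < t" "t < r2"
    and y: "y1 \<in> K" "y2 \<in> K" "u \<bullet> y1 > u \<bullet> P" "u \<bullet> y2 < u \<bullet> P"
  shows False
proof -
  define \<mu> where "\<mu> = (t - r1) / (r2 - r1)"
  have m: "0 < \<mu>" "\<mu> < 1" using r unfolding \<mu>_def by (auto simp: field_simps)
  have "(1 - \<mu>) * r1 + \<mu> * r2 = r1 + \<mu> * (r2 - r1)" by (simp add: algebra_simps)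
  also have "\<dots> = t" using r unfolding \<mu>_def by simp
  finally have "(1 - \<mu>) * r1 + \<mu> * r2 = t" .
  then have "P + t *\<^sub>R d = (1 - \<mu>) *\<^sub>R (P + r1 *\<^sub>R d) + \<mu> *\<^sub>R (P + r2 *\<^sub>R d)"
    by (auto simp: algebra_simps simp flip: scaleR_add_left)
  moreover have "P + r1 *\<^sub>R d \<noteq> P + r2 *\<^sub>R d" using r d by auto
  moreover have "u \<bullet> (P + r1 *\<^sub>R d) = u \<bullet> (P + r2 *\<^sub>R d)" "u \<bullet> (P + t *\<^sub>R d) = u \<bullet> P"
    using d by (simp_all add: inner_add_right)
  ultimately show False
    using frontier_open_chord_supporting[OF K p q _ m u] y by force
qed

lemma frontier_not_in_open_triangle:
  fixes u a b p1 p2 :: "real^2"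
  assumes K: "convex K" "interior K \<noteq> {}" "p1 \<in> frontier K" "a \<in> K" "b \<in> K" "p2 \<in> K"
    and p1: "\<alpha> > 0" "\<beta> > 0" "\<gamma> > 0" "\<alpha> + \<beta> + \<gamma> = 1" "p1 = \<alpha> *\<^sub>R a + \<beta> *\<^sub>R b + \<gamma> *\<^sub>R p2"
    and ab: "u \<noteq> 0" "u \<bullet> a = M" "u \<bullet> b = M" "a \<noteq> b" "u \<bullet> p2 < M"
  shows False
proof -
  obtain w where w: "w \<noteq> 0" "\<And>y. y \<in> K \<Longrightarrow> w \<bullet> y \<le> w \<bullet> p1"
    using convex_frontier_supporting K(1-3) by blast
  have e: "w \<bullet> p1 = \<alpha> * (w \<bullet> a) + \<beta> * (w \<bullet> b) + \<gamma> * (w \<bullet> p2)"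
    using p1(5) by (simp add: inner_add_right)
  have "w \<bullet> a \<le> w \<bullet> p1" "w \<bullet> b \<le> w \<bullet> p1" "w \<bullet> p2 \<le> w \<bullet> p1" using w(2) K(4-6) by auto
  then have "w \<bullet> a = w \<bullet> p1" "w \<bullet> b = w \<bullet> p1" "w \<bullet> p2 = w \<bullet> p1"
    using convex_comb_eq_max[of \<alpha> \<beta> \<gamma> "w \<bullet> p1" "w \<bullet> a" "w \<bullet> b" "w \<bullet> p2"]
      convex_comb_eq_max[of \<gamma> \<alpha> \<beta> "w \<bullet> p1" "w \<bullet> p2" "w \<bullet> a" "w \<bullet> b"] p1(1-4) e
    by (simp_all add: algebra_simps)
  then have h: "w \<bullet> (b - a) = 0" "w \<bullet> (p2 - a) = 0" by (auto simp: inner_diff_right)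
  define k where "k = (w \<bullet> u) / (u \<bullet> u)"
  have "w = k *\<^sub>R u"
    unfolding k_def by (rule orthogonal_2_parallel[OF ab(1) _ _ h(1)]) (use ab in \<open>auto simp: inner_diff_right\<close>)
  then have "k * (u \<bullet> p2 - M) = 0" using h(2) ab(2) by (simp add: inner_diff_right)
  then have "k = 0" using ab(5) by simp
  then show False using \<open>w = k *\<^sub>R u\<close> w(1) by simp
qed

section \<open>Simple closed curves\<close>

lemma simple_closed_curve_infinite:
  assumes "simple_closed_curve \<Gamma>"
  shows "infinite \<Gamma>"
proof -
  obtain g where g: "simple_path g" "path_image g = \<Gamma>" using assms unfolding simple_closed_curve_def by blast
  have "inj_on g {0<..<(1::real)}" using g(1) unfolding simple_path_def loop_free_def inj_on_def by fastforce
  moreover have "g ` {0<..<1} \<subseteq> \<Gamma>" using g(2) unfolding path_image_def by auto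
  ultimately show ?thesis using finite_imageD infinite_Ioo finite_subset by (metis zero_less_one)
qed

lemma csc_position_small_subset:
  assumes "simple_closed_curve \<Gamma>"
    and csc: "\<And>S. S \<subseteq> \<Gamma> \<Longrightarrow> finite S \<Longrightarrow> card S = 6 \<Longrightarrow> csc_position S"
    and "S \<subseteq> \<Gamma>" "finite S" "card S \<le> 6"
  obtains K where "cs_convex_body K" "S \<subseteq> frontier K"
proof -
  have "infinite (\<Gamma> - S)" using simple_closed_curve_infinite[OF assms(1)] assms(4) by auto
  then obtain T where T: "finite T" "card T = 6 - card S" "T \<subseteq> \<Gamma> - S"
    using infinite_arbitrarily_large by blast
  then have "card (S \<union> T) = 6" using assms(4,5) by (subst card_Un_disjoint) auto
  then have "csc_position (S \<union> T)" using T assms(3,4) by (intro csc) auto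
  then show ?thesis using that unfolding csc_position_def by blast
qed

lemma simple_closed_curve_path_from:
  assumes "simple_closed_curve \<Gamma>" "p \<in> \<Gamma>"
  obtains g where "simple_path g" "path_image g = \<Gamma>" "g 0 = p" "g 1 = p"
proof -
  obtain g where g: "simple_path g" "pathfinish g = pathstart g" "path_image g = \<Gamma>"
    using assms(1) unfolding simple_closed_curve_def by blast
  obtain s where s: "s \<in> {0..1}" "g s = p" using assms(2) g(3) unfolding path_image_def by auto
  have "simple_path (shiftpath s g)" "path_image (shiftpath s g) = \<Gamma>"
    using simple_path_shiftpath[OF g(1,2)] path_image_shiftpath[OF _ g(2)] g(3) s by auto
  moreover have "pathfinish (shiftpath s g) = pathstart (shiftpath s g)" using closed_shiftpath g s by auto
  moreover have "shiftpath s g 0 = p" using s unfolding shiftpath_def by auto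
  ultimately show ?thesis using that by (simp add: pathstart_def pathfinish_def)
qed

lemma simple_path_inj_interior:
  assumes "simple_path g" "x \<in> {0<..<1}" "y \<in> {0..1}" "x \<noteq> y"
  shows "g x \<noteq> g y"
  using assms unfolding simple_path_def loop_free_def by fastforce

text \<open>Past the last time \<open>t0\<close> with \<open>f t0 = m\<close>, \<open>f\<close> stays above \<open>m\<close>, so small levels \<open>m + \<delta>\<close>
  are attained right after \<open>t0\<close>, where \<open>G\<close> is still close to \<open>G t0\<close>.\<close>

lemma level_crossing_right:
  fixes f :: "real \<Rightarrow> real" and G :: "real \<Rightarrow> 'a::metric_space"
  assumes ab: "\<alpha> < \<beta>" and cf: "continuous_on {\<alpha>..\<beta>} f" and cG: "continuous_on {\<alpha>..\<beta>} G"
    and fa: "f \<alpha> = m" and fb: "f \<beta> > m" and ge: "\<forall>x\<in>{\<alpha>..\<beta>}. f x \<ge> m" and e: "\<epsilon> > 0"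
  shows "\<exists>\<eta>>0. \<forall>\<delta>. 0 < \<delta> \<and> \<delta> < \<eta> \<longrightarrow>
     (\<exists>\<tau>\<in>{\<alpha><..<\<beta>}. f \<tau> = m + \<delta> \<and> (\<exists>\<tau>0\<in>{\<alpha>..\<beta>}. f \<tau>0 = m \<and> dist (G \<tau>) (G \<tau>0) < \<epsilon>))"
proof -
  define Z where "Z = {x \<in> {\<alpha>..\<beta>}. f x = m}"
  have cZ: "closed Z" unfolding Z_def by (rule continuous_closed_preimage_constant[OF cf]) simp
  have "\<alpha> \<in> Z" using fa ab unfolding Z_def by auto
  then have nZ: "Z \<noteq> {}" "bdd_above Z" unfolding Z_def by (auto intro: bdd_aboveI[of _ \<beta>])
  define t0 where "t0 = Sup Z"
  have t0i: "\<alpha> \<le> t0" "t0 \<le> \<beta>" "f t0 = m"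
    using closed_contains_Sup[OF nZ cZ] unfolding t0_def Z_def by auto
  have t0b: "t0 < \<beta>" using t0i fb by (cases "t0 = \<beta>") auto
  have after: "f x > m" if "t0 < x" "x \<le> \<beta>" for x
  proof -
    have "x \<notin> Z" using that cSup_upper[OF _ nZ(2)] unfolding t0_def by force
    then show ?thesis using ge that t0i unfolding Z_def by (metis (mono_tags) atLeastAtMost_iff le_less mem_Collect_eq order.trans)
  qed
  obtain \<rho> where rho: "\<rho> > 0" "\<forall>x'\<in>{\<alpha>..\<beta>}. dist x' t0 < \<rho> \<longrightarrow> dist (G x') (G t0) < \<epsilon>"
    using cG e t0i unfolding continuous_on_iff by (meson atLeastAtMost_iff)
  define t1 where "t1 = min (t0 + \<rho>/2) \<beta>"
  have t1: "t0 < t1" "t1 \<le> \<beta>" "t1 < t0 + \<rho>" using t0b rho unfolding t1_def by auto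
  have ft1: "f t1 > m" using after t1 by auto
  show ?thesis
  proof (intro exI[of _ "f t1 - m"] conjI allI impI)
    show "f t1 - m > 0" using ft1 by simp
    fix \<delta> assume d: "0 < \<delta> \<and> \<delta> < f t1 - m"
    have "continuous_on {t0..t1} f" by (rule continuous_on_subset[OF cf]) (use t0i t1 in auto)
    then obtain \<tau> where tau: "t0 \<le> \<tau>" "\<tau> \<le> t1" "f \<tau> = m + \<delta>"
      using IVT'[of f t0 "m + \<delta>" t1] t0i d t1 by auto
    have "\<tau> \<noteq> t0" "\<tau> \<noteq> t1" using tau t0i d by auto
    then have ti: "\<tau> \<in> {\<alpha><..<\<beta>}" using tau t0i t1 by auto
    have "dist (G \<tau>) (G t0) < \<epsilon>" using rho(2) ti tau t1 by (auto simp: dist_real_def)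
    then show "\<exists>\<tau>\<in>{\<alpha><..<\<beta>}. f \<tau> = m + \<delta> \<and> (\<exists>\<tau>0\<in>{\<alpha>..\<beta>}. f \<tau>0 = m \<and> dist (G \<tau>) (G \<tau>0) < \<epsilon>)"
      using ti tau(3) t0i by (intro bexI[of _ \<tau>] conjI bexI[of _ t0]) auto
  qed
qed

lemma level_crossing_left:
  fixes f :: "real \<Rightarrow> real" and G :: "real \<Rightarrow> 'a::metric_space"
  assumes ab: "\<alpha> < \<beta>" and cf: "continuous_on {\<alpha>..\<beta>} f" and cG: "continuous_on {\<alpha>..\<beta>} G"
    and fa: "f \<alpha> > m" and fb: "f \<beta> = m" and ge: "\<forall>x\<in>{\<alpha>..\<beta>}. f x \<ge> m" and e: "\<epsilon> > 0"
  shows "\<exists>\<eta>>0. \<forall>\<delta>. 0 < \<delta> \<and> \<delta> < \<eta> \<longrightarrow>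
     (\<exists>\<tau>\<in>{\<alpha><..<\<beta>}. f \<tau> = m + \<delta> \<and> (\<exists>\<tau>0\<in>{\<alpha>..\<beta>}. f \<tau>0 = m \<and> dist (G \<tau>) (G \<tau>0) < \<epsilon>))"
proof -
  define r where "r = (\<lambda>x::real. \<alpha> + \<beta> - x)"
  have r: "r ` {\<alpha>..\<beta>} = {\<alpha>..\<beta>}" "r ` {\<alpha><..<\<beta>} = {\<alpha><..<\<beta>}" "\<And>x. r (r x) = x"
    unfolding r_def by (auto intro!: image_eqI[where x = "\<alpha> + \<beta> - _"])
  have cr: "continuous_on {\<alpha>..\<beta>} r" unfolding r_def by (intro continuous_intros)
  have "continuous_on {\<alpha>..\<beta>} (f \<circ> r)" "continuous_on {\<alpha>..\<beta>} (G \<circ> r)"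
    using continuous_on_compose[OF cr] cf cG r(1) by metis+
  moreover have "(f \<circ> r) \<alpha> = m" "(f \<circ> r) \<beta> > m" "\<forall>x\<in>{\<alpha>..\<beta>}. (f \<circ> r) x \<ge> m"
    using fa fb ge r(1) by (auto simp: r_def)
  ultimately obtain \<eta> where "\<eta> > 0" and \<eta>: "\<forall>\<delta>. 0 < \<delta> \<and> \<delta> < \<eta> \<longrightarrow>
     (\<exists>\<tau>\<in>{\<alpha><..<\<beta>}. f (r \<tau>) = m + \<delta> \<and> (\<exists>\<tau>0\<in>{\<alpha>..\<beta>}. f (r \<tau>0) = m \<and> dist (G (r \<tau>)) (G (r \<tau>0)) < \<epsilon>))"
    using level_crossing_right[OF ab _ _ _ _ _ e, of "f \<circ> r" "G \<circ> r"] by auto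
  show ?thesis
  proof (intro exI[of _ \<eta>] conjI allI impI)
    show "\<eta> > 0" by fact
    fix \<delta> assume "0 < \<delta> \<and> \<delta> < \<eta>"
    then obtain \<tau> \<tau>0 where "\<tau> \<in> {\<alpha><..<\<beta>}" "\<tau>0 \<in> {\<alpha>..\<beta>}" "f (r \<tau>) = m + \<delta>" "f (r \<tau>0) = m"
        "dist (G (r \<tau>)) (G (r \<tau>0)) < \<epsilon>"
      using \<eta> by blast
    then show "\<exists>\<tau>\<in>{\<alpha><..<\<beta>}. f \<tau> = m + \<delta> \<and> (\<exists>\<tau>0\<in>{\<alpha>..\<beta>}. f \<tau>0 = m \<and> dist (G \<tau>) (G \<tau>0) < \<epsilon>)"
      using r(1,2) by blast
  qed
qed
section \<open>The intersection with a supporting line\<close>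

lemma curve_no_two_points_under_chord:
  fixes u a b p q r :: "real^2"
  assumes sc: "simple_closed_curve \<Gamma>"
    and csc: "\<And>S. S \<subseteq> \<Gamma> \<Longrightarrow> finite S \<Longrightarrow> card S = 6 \<Longrightarrow> csc_position S"
    and u: "u \<noteq> 0" and ab: "a \<in> \<Gamma>" "b \<in> \<Gamma>" "u \<bullet> a = M" "u \<bullet> b = M" "a \<noteq> b"
    and r: "0 < \<mu>" "\<mu> < 1" "r = (1 - \<mu>) *\<^sub>R a + \<mu> *\<^sub>R b"
    and pq: "p \<in> \<Gamma>" "q \<in> \<Gamma>" "(b - a) \<bullet> p = (b - a) \<bullet> r" "(b - a) \<bullet> q = (b - a) \<bullet> r"
      "u \<bullet> q < u \<bullet> p" "u \<bullet> p < M"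
  shows False
proof -
  define d where "d = b - a"
  have d: "d \<noteq> 0" "u \<bullet> d = 0" using ab by (auto simp: d_def inner_diff_right)
  define \<theta> where "\<theta> = (M - u \<bullet> p) / (M - u \<bullet> q)"
  have l: "0 < \<theta>" "\<theta> < 1" using pq unfolding \<theta>_def by (auto simp: field_simps)
  have ur: "u \<bullet> r = M" unfolding r(3) using ab by (simp add: inner_add_right algebra_simps)
  have "p = (1 - \<theta>) *\<^sub>R r + \<theta> *\<^sub>R q"
  proof (rule vec2_eq_if_inner_eq[OF u d(1) d(2)])
    have "u \<bullet> ((1 - \<theta>) *\<^sub>R r + \<theta> *\<^sub>R q) = M - \<theta> * (M - u \<bullet> q)"
      using ur by (simp add: inner_add_right algebra_simps)
    also have "\<dots> = u \<bullet> p" using pq unfolding \<theta>_def by simp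
    finally show "u \<bullet> p = u \<bullet> ((1 - \<theta>) *\<^sub>R r + \<theta> *\<^sub>R q)" by simp
    have "d \<bullet> q = d \<bullet> r" "d \<bullet> p = d \<bullet> r" using pq unfolding d_def by auto
    then show "d \<bullet> p = d \<bullet> ((1 - \<theta>) *\<^sub>R r + \<theta> *\<^sub>R q)"
      by (simp add: inner_add_right algebra_simps)
  qed
  then have p: "p = ((1 - \<theta>) * (1 - \<mu>)) *\<^sub>R a + ((1 - \<theta>) * \<mu>) *\<^sub>R b + \<theta> *\<^sub>R q"
    using r by (simp add: algebra_simps scaleR_add_right)
  have "{a, b, p, q} \<subseteq> \<Gamma>" using ab pq by simp
  moreover have "card {a, b, p, q} \<le> 6" using card_length[of "[a, b, p, q]"] by simp
  ultimately obtain K where K: "cs_convex_body K" "{a, b, p, q} \<subseteq> frontier K"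
    using csc_position_small_subset[OF sc csc] by blast
  note KC = cs_convex_body_convex_closed[OF K(1)]
  have "a \<in> K" "b \<in> K" "q \<in> K" using K(2) frontier_subset_closed[OF KC(2)] by blast+
  moreover have "(1 - \<theta>) * (1 - \<mu>) > 0" "(1 - \<theta>) * \<mu> > 0" using l r by auto
  moreover have "(1 - \<theta>) * (1 - \<mu>) + (1 - \<theta>) * \<mu> + \<theta> = 1" by (simp add: algebra_simps)
  moreover have "p \<in> frontier K" "u \<bullet> q < M" using K(2) pq(5,6) by auto
  ultimately show False
    using frontier_not_in_open_triangle[OF KC(1,3) _ _ _ _ _ _ l(1) _ p u ab(3-5)] by blast
qed

lemma simple_closed_curve_crosses_twice:
  fixes d :: "real^2"
  assumes sc: "simple_closed_curve \<Gamma>" and ab: "a \<in> \<Gamma>" "b \<in> \<Gamma>" "d \<bullet> a < c" "c < d \<bullet> b"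
  obtains p1 p2 where "p1 \<in> \<Gamma>" "p2 \<in> \<Gamma>" "p1 \<noteq> p2" "d \<bullet> p1 = c" "d \<bullet> p2 = c"
proof -
  obtain g where g: "simple_path g" "path_image g = \<Gamma>" "g 0 = a" "g 1 = a"
    using simple_closed_curve_path_from[OF sc ab(1)] by blast
  obtain t where t: "t \<in> {0..1}" "g t = b" using ab(2) g(2) unfolding path_image_def by auto
  define f where "f = (\<lambda>\<tau>. d \<bullet> g \<tau>)"
  have cf: "continuous_on {0..1} f" unfolding f_def
    using g(1) unfolding simple_path_def path_def by (intro continuous_intros) auto
  have f: "f 0 < c" "f 1 < c" "c < f t" using ab g(3,4) t(2) unfolding f_def by auto
  obtain \<tau>1 where t1: "0 \<le> \<tau>1" "\<tau>1 \<le> t" "f \<tau>1 = c"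
    using IVT'[of f 0 c t] f t cf continuous_on_subset[of "{0..1}" f "{0..t}"] by force
  obtain \<tau>2 where t2: "t \<le> \<tau>2" "\<tau>2 \<le> 1" "f \<tau>2 = c"
    using IVT2'[of f 1 c t] f t cf continuous_on_subset[of "{0..1}" f "{t..1}"] by force
  have "\<tau>1 \<noteq> 0" "\<tau>1 \<noteq> t" "\<tau>2 \<noteq> t" using t1 t2 f by auto
  then have "\<tau>1 \<in> {0<..<1}" "\<tau>2 \<in> {0..1}" "\<tau>1 \<noteq> \<tau>2" using t1 t2 t by auto
  then have "g \<tau>1 \<noteq> g \<tau>2" by (rule simple_path_inj_interior[OF g(1)])
  moreover have "g \<tau>1 \<in> \<Gamma>" "g \<tau>2 \<in> \<Gamma>" using g(2) t1 t2 t unfolding path_image_def by auto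
  ultimately show ?thesis using that t1(3) t2(3) unfolding f_def by blast
qed

text \<open>Both arcs of \<Gamma> from \<open>a\<close> to \<open>b\<close> cross the normal through \<open>r\<close>, each below the line
  unless they pass through \<open>r\<close>.\<close>

lemma open_chord_in_curve:
  fixes u a b r :: "real^2"
  assumes sc: "simple_closed_curve \<Gamma>"
    and csc: "\<And>S. S \<subseteq> \<Gamma> \<Longrightarrow> finite S \<Longrightarrow> card S = 6 \<Longrightarrow> csc_position S"
    and u: "u \<noteq> 0" and sub: "\<Gamma> \<subseteq> {x. u \<bullet> x \<le> M}"
    and ab: "a \<in> \<Gamma>" "b \<in> \<Gamma>" "u \<bullet> a = M" "u \<bullet> b = M" "a \<noteq> b"
    and r: "0 < \<mu>" "\<mu> < 1" "r = (1 - \<mu>) *\<^sub>R a + \<mu> *\<^sub>R b"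
  shows "r \<in> \<Gamma>"
proof (rule ccontr)
  assume rn: "r \<notin> \<Gamma>"
  define d where "d = b - a"
  have d: "d \<noteq> 0" "u \<bullet> d = 0" using ab by (auto simp: d_def inner_diff_right)
  have "d \<bullet> r = d \<bullet> a + \<mu> * (d \<bullet> d)" "d \<bullet> b = d \<bullet> a + d \<bullet> d" unfolding r(3) d_def
    by (simp_all add: inner_add_right inner_diff_left inner_diff_right algebra_simps)
  moreover have dd: "d \<bullet> d > 0" using d(1) by simp
  then have "0 < \<mu> * (d \<bullet> d)" "\<mu> * (d \<bullet> d) < d \<bullet> d"
    using r(1) mult_strict_right_mono[OF r(2) dd] by simp_all
  ultimately have "d \<bullet> a < d \<bullet> r" "d \<bullet> r < d \<bullet> b" by linarith+
  then obtain p1 p2 where p: "p1 \<in> \<Gamma>" "p2 \<in> \<Gamma>" "p1 \<noteq> p2" "d \<bullet> p1 = d \<bullet> r" "d \<bullet> p2 = d \<bullet> r"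
    using simple_closed_curve_crosses_twice[OF sc ab(1,2)] by blast
  have ur: "u \<bullet> r = M" unfolding r(3) using ab by (simp add: inner_add_right algebra_simps)
  have "u \<bullet> p1 \<noteq> M" "u \<bullet> p2 \<noteq> M"
    using vec2_eq_if_inner_eq[OF u d] p ur rn by metis+
  then have lt: "u \<bullet> p1 < M" "u \<bullet> p2 < M" using sub p by force+
  have "u \<bullet> p1 \<noteq> u \<bullet> p2" using vec2_eq_if_inner_eq[OF u d] p by metis
  then consider "u \<bullet> p2 < u \<bullet> p1" | "u \<bullet> p1 < u \<bullet> p2" by linarith
  then show False
  proof cases
    case 1
    show False by (rule curve_no_two_points_under_chord[OF sc csc u ab r p(1,2) p(4,5)[unfolded d_def] 1 lt(1)])
  next
    case 2
    show False by (rule curve_no_two_points_under_chord[OF sc csc u ab r p(2,1) p(5,4)[unfolded d_def] 2 lt(2)])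
  qed
qed

lemma supporting_line_inter_curve_segment:
  fixes u :: "real^2"
  assumes sc: "simple_closed_curve \<Gamma>"
    and csc: "\<And>S. S \<subseteq> \<Gamma> \<Longrightarrow> finite S \<Longrightarrow> card S = 6 \<Longrightarrow> csc_position S"
    and u: "u \<noteq> 0" and sub: "\<Gamma> \<subseteq> {x. u \<bullet> x \<le> M}"
    and ne: "{x. u \<bullet> x = M} \<inter> \<Gamma> \<noteq> {}"
  obtains a b where "{x. u \<bullet> x = M} \<inter> \<Gamma> = closed_segment a b"
proof -
  define T where "T = {x. u \<bullet> x = M} \<inter> \<Gamma>"
  obtain g where "simple_path g" "path_image g = \<Gamma>" using sc unfolding simple_closed_curve_def by blast
  then have "compact \<Gamma>" using compact_simple_path_image by blast
  then have cT: "compact T" unfolding T_def by (simp add: Int_commute closed_hyperplane compact_Int_closed)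
  obtain v where v: "v \<noteq> 0" "u \<bullet> v = 0" using exists_orthogonal_2[OF u] by blast
  have cv: "continuous_on T (\<lambda>x. v \<bullet> x)" by (intro continuous_intros)
  obtain a where a: "a \<in> T" "\<forall>y\<in>T. v \<bullet> a \<le> v \<bullet> y"
    using continuous_attains_inf[OF cT _ cv] ne T_def by blast
  obtain b where b: "b \<in> T" "\<forall>y\<in>T. v \<bullet> y \<le> v \<bullet> b"
    using continuous_attains_sup[OF cT _ cv] ne T_def by blast
  have "T \<subseteq> closed_segment a b"
  proof
    fix y assume y: "y \<in> T"
    show "y \<in> closed_segment a b"
    proof (cases "v \<bullet> a = v \<bullet> b")
      case True
      then have "y = a" using vec2_eq_if_inner_eq[OF u v] a b y unfolding T_def by force
      then show ?thesis by simp
    next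
      case False
      then have lt: "v \<bullet> a < v \<bullet> b" using a b by force
      define \<mu> where "\<mu> = (v \<bullet> y - v \<bullet> a) / (v \<bullet> b - v \<bullet> a)"
      have "y = (1 - \<mu>) *\<^sub>R a + \<mu> *\<^sub>R b"
      proof (rule vec2_eq_if_inner_eq[OF u v])
        show "u \<bullet> y = u \<bullet> ((1 - \<mu>) *\<^sub>R a + \<mu> *\<^sub>R b)"
          using a b y unfolding T_def by (simp add: inner_add_right algebra_simps)
        have "v \<bullet> ((1 - \<mu>) *\<^sub>R a + \<mu> *\<^sub>R b) = v \<bullet> a + \<mu> * (v \<bullet> b - v \<bullet> a)"
          by (simp add: inner_add_right algebra_simps)
        also have "\<dots> = v \<bullet> y" using lt unfolding \<mu>_def by simp
        finally show "v \<bullet> y = v \<bullet> ((1 - \<mu>) *\<^sub>R a + \<mu> *\<^sub>R b)" by simp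
      qed
      moreover have "0 \<le> \<mu>" "\<mu> \<le> 1" using a b y lt unfolding \<mu>_def by (auto simp: field_simps)
      ultimately show ?thesis unfolding closed_segment_def by blast
    qed
  qed
  moreover have "closed_segment a b \<subseteq> T"
  proof
    fix z assume "z \<in> closed_segment a b"
    then obtain \<mu> where m: "z = (1 - \<mu>) *\<^sub>R a + \<mu> *\<^sub>R b" "0 \<le> \<mu>" "\<mu> \<le> 1"
      unfolding closed_segment_def by blast
    have "u \<bullet> z = M" using a b unfolding m(1) T_def by (simp add: inner_add_right algebra_simps)
    moreover have "z \<in> \<Gamma>"
    proof (cases "\<mu> = 0 \<or> \<mu> = 1 \<or> a = b")
      case True
      then show ?thesis using a b m unfolding T_def by auto
    next
      case False
      then have "0 < \<mu>" "\<mu> < 1" "a \<noteq> b" using m(2,3) by auto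
      moreover have "a \<in> \<Gamma>" "b \<in> \<Gamma>" "u \<bullet> a = M" "u \<bullet> b = M" using a(1) b(1) unfolding T_def by auto
      ultimately show ?thesis using open_chord_in_curve[OF sc csc u sub, of a b \<mu> z] m(1) by blast
    qed
    ultimately show "z \<in> T" unfolding T_def by simp
  qed
  ultimately have "T = closed_segment a b" by (rule subset_antisym)
  then show ?thesis using that unfolding T_def by blast
qed

section \<open>Comparing the two chords\<close>

lemma dist_le_closed_segment_length:
  fixes a b x y :: "'a::real_normed_vector"
  assumes "x \<in> closed_segment a b" "y \<in> closed_segment a b"
  shows "dist x y \<le> dist a b"
proof -
  obtain s where s: "x = (1 - s) *\<^sub>R a + s *\<^sub>R b" "0 \<le> s" "s \<le> 1" using assms(1) unfolding closed_segment_def by blast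
  obtain t where t: "y = (1 - t) *\<^sub>R a + t *\<^sub>R b" "0 \<le> t" "t \<le> 1" using assms(2) unfolding closed_segment_def by blast
  have "x - y = (t - s) *\<^sub>R (a - b)" unfolding s(1) t(1) by (simp add: algebra_simps)
  then have "dist x y = \<bar>t - s\<bar> * dist a b" by (simp add: dist_norm)
  also have "\<dots> \<le> 1 * dist a b" using s t by (intro mult_right_mono) auto
  finally show ?thesis by simp
qed

text \<open>Starting at the lowest point \<open>a'\<close> of \<Gamma>, the arcs towards the top point \<open>a\<close> leave the bottom
  line near the bottom chord, and both reach every level slightly above it.\<close>

lemma curve_crosses_level_near_bottom_chord:
  fixes u a a' b' :: "real^2"
  assumes sc: "simple_closed_curve \<Gamma>"
    and sub: "\<Gamma> \<subseteq> {x. m \<le> u \<bullet> x \<and> u \<bullet> x \<le> M}" and mM: "m < M"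
    and top: "a \<in> \<Gamma>" "u \<bullet> a = M"
    and B: "{x. u \<bullet> x = m} \<inter> \<Gamma> = closed_segment a' b'" and e: "\<epsilon> > 0"
  obtains \<delta> x1 x3 where "m < \<delta>" "\<delta> < M" "x1 \<in> \<Gamma>" "x3 \<in> \<Gamma>" "x1 \<noteq> x3" "u \<bullet> x1 = \<delta>" "u \<bullet> x3 = \<delta>"
    "dist x1 x3 < dist a' b' + 2 * \<epsilon>"
proof -
  obtain g where g: "simple_path g" "path_image g = \<Gamma>" "g 0 = a" "g 1 = a"
    using simple_closed_curve_path_from[OF sc top(1)] by blast
  have a'B: "a' \<in> \<Gamma>" "u \<bullet> a' = m" using B by auto
  obtain \<sigma> where s: "\<sigma> \<in> {0..1}" "g \<sigma> = a'" using a'B g(2) unfolding path_image_def by auto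
  have "\<sigma> \<noteq> 0" "\<sigma> \<noteq> 1" using s g(3,4) top a'B mM by auto
  then have s01: "0 < \<sigma>" "\<sigma> < 1" using s by auto
  define f where "f = (\<lambda>\<tau>. u \<bullet> g \<tau>)"
  have cg: "continuous_on {0..1} g" using g(1) unfolding simple_path_def path_def by auto
  have cf: "continuous_on {0..1} f" unfolding f_def using cg by (intro continuous_intros) auto
  have gG: "g \<tau> \<in> \<Gamma>" if "\<tau> \<in> {0..1}" for \<tau> using g(2) that unfolding path_image_def by auto
  have ge: "\<forall>x\<in>{0..1}. f x \<ge> m" using sub gG unfolding f_def by force
  have fs: "f \<sigma> = m" using s a'B unfolding f_def by auto
  have f01: "f 0 = M" "f 1 = M" using top g(3,4) unfolding f_def by auto
  obtain \<eta>1 where e1: "\<eta>1 > 0" "\<forall>\<delta>. 0 < \<delta> \<and> \<delta> < \<eta>1 \<longrightarrow>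
     (\<exists>\<tau>\<in>{0<..<\<sigma>}. f \<tau> = m + \<delta> \<and> (\<exists>\<tau>0\<in>{0..\<sigma>}. f \<tau>0 = m \<and> dist (g \<tau>) (g \<tau>0) < \<epsilon>))"
    using level_crossing_left[of 0 \<sigma> f g m \<epsilon>] s01 cf cg fs f01 mM ge e
      continuous_on_subset[of "{0..1}" f "{0..\<sigma>}"] continuous_on_subset[of "{0..1}" g "{0..\<sigma>}"] by force
  obtain \<eta>2 where e2: "\<eta>2 > 0" "\<forall>\<delta>. 0 < \<delta> \<and> \<delta> < \<eta>2 \<longrightarrow>
     (\<exists>\<tau>\<in>{\<sigma><..<1}. f \<tau> = m + \<delta> \<and> (\<exists>\<tau>0\<in>{\<sigma>..1}. f \<tau>0 = m \<and> dist (g \<tau>) (g \<tau>0) < \<epsilon>))"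
    using level_crossing_right[of \<sigma> 1 f g m \<epsilon>] s01 cf cg fs f01 mM ge e
      continuous_on_subset[of "{0..1}" f "{\<sigma>..1}"] continuous_on_subset[of "{0..1}" g "{\<sigma>..1}"] by force
  define \<delta> where "\<delta> = min (min \<eta>1 \<eta>2) (M - m) / 2"
  have d: "0 < \<delta>" "\<delta> < \<eta>1" "\<delta> < \<eta>2" "\<delta> < M - m" using e1(1) e2(1) mM unfolding \<delta>_def by auto
  obtain \<tau>1 \<tau>01 where T1: "\<tau>1 \<in> {0<..<\<sigma>}" "f \<tau>1 = m + \<delta>" "\<tau>01 \<in> {0..\<sigma>}" "f \<tau>01 = m"
      "dist (g \<tau>1) (g \<tau>01) < \<epsilon>"
    using e1(2) d by blast
  obtain \<tau>2 \<tau>02 where T2: "\<tau>2 \<in> {\<sigma><..<1}" "f \<tau>2 = m + \<delta>" "\<tau>02 \<in> {\<sigma>..1}" "f \<tau>02 = m"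
      "dist (g \<tau>2) (g \<tau>02) < \<epsilon>"
    using e2(2) d by blast
  have i: "\<tau>1 \<in> {0<..<1}" "\<tau>2 \<in> {0..1}" "\<tau>1 \<noteq> \<tau>2" using T1 T2 s01 by auto
  have y1: "g \<tau>01 \<in> closed_segment a' b'" using T1 s01 gG[of \<tau>01] B unfolding f_def by auto
  have y2: "g \<tau>02 \<in> closed_segment a' b'" using T2 s01 gG[of \<tau>02] B unfolding f_def by auto
  have "dist (g \<tau>1) (g \<tau>2) \<le> dist (g \<tau>1) (g \<tau>01) + dist (g \<tau>01) (g \<tau>02) + dist (g \<tau>02) (g \<tau>2)"
    using dist_triangle[of "g \<tau>1" "g \<tau>2" "g \<tau>01"] dist_triangle[of "g \<tau>01" "g \<tau>2" "g \<tau>02"] by linarith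
  also have "\<dots> < \<epsilon> + dist a' b' + \<epsilon>"
    using T1(5) T2(5) dist_le_closed_segment_length[OF y1 y2] by (simp add: dist_commute)
  finally have "dist (g \<tau>1) (g \<tau>2) < dist a' b' + 2 * \<epsilon>" by simp
  moreover have "g \<tau>1 \<noteq> g \<tau>2" using simple_path_inj_interior[OF g(1) i] .
  moreover have "m < m + \<delta>" "m + \<delta> < M" "g \<tau>1 \<in> \<Gamma>" "g \<tau>2 \<in> \<Gamma>" using d gG i by auto
  ultimately show ?thesis using that T1(2) T2(2) unfolding f_def by blast
qed

text \<open>A body with a flat top contains, by central symmetry, a translate of the top chord below
  each of its points, hence by convexity a translate at every lower level above that point.\<close>

lemma cs_convex_body_chord_translate:
  fixes u a b y :: "real^2"
  assumes K: "cs_convex_body K" "a \<in> K" "b \<in> K" "y \<in> K"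
    and top: "u \<bullet> a = M" "u \<bullet> b = M" "\<forall>x\<in>K. u \<bullet> x \<le> M"
    and \<delta>: "u \<bullet> y < \<delta>" "\<delta> < M"
  obtains P where "u \<bullet> P = \<delta>" "P \<in> K" "P + (b - a) \<in> K"
proof -
  obtain c where c: "\<forall>x\<in>K. 2 *\<^sub>R c - x \<in> K" using K(1) unfolding cs_convex_body_def by auto
  have cK: "convex K" using cs_convex_body_convex_closed(1)[OF K(1)] .
  define M0 where "M0 = 2 * (u \<bullet> c) - M"
  have "u \<bullet> (2 *\<^sub>R c - y) \<le> M" using c top(3) K(4) by blast
  then have M0: "M0 < \<delta>" using \<delta> unfolding M0_def by (simp add: inner_diff_right)
  have sK: "2 *\<^sub>R c - b \<in> K" "2 *\<^sub>R c - a \<in> K" using c K(2,3) by auto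
  define \<theta> where "\<theta> = (\<delta> - M0) / (M - M0)"
  have l: "0 < \<theta>" "\<theta> < 1" using \<delta> M0 unfolding \<theta>_def by (auto simp: field_simps)
  define P where "P = \<theta> *\<^sub>R a + (1 - \<theta>) *\<^sub>R (2 *\<^sub>R c - b)"
  show ?thesis
  proof (rule that)
    have "u \<bullet> P = M0 + \<theta> * (M - M0)"
      using top unfolding P_def M0_def by (simp add: inner_add_right inner_diff_right algebra_simps)
    also have "\<dots> = \<delta>" using \<delta> M0 unfolding \<theta>_def by simp
    finally show "u \<bullet> P = \<delta>" .
    show "P \<in> K" unfolding P_def using cK K(2) sK l by (auto intro: convexD)
    have "P + (b - a) = \<theta> *\<^sub>R b + (1 - \<theta>) *\<^sub>R (2 *\<^sub>R c - a)" unfolding P_def by (simp add: algebra_simps)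
    then show "P + (b - a) \<in> K" using cK K(3) sK l by (auto intro: convexD)
  qed
qed

text \<open>Write \<open>x\<^sub>i = P + t\<^sub>i d\<close> with \<open>|t\<^sub>1 - t\<^sub>3| < 1\<close>: one of \<open>x\<^sub>1, x\<^sub>3\<close> lies strictly between the other
  and one of \<open>P, P + d\<close>.\<close>

lemma frontier_points_on_chord_far_apart:
  fixes u d P x1 x3 y1 y2 :: "real^2"
  assumes K: "convex K" "closed K" "interior K \<noteq> {}" and u: "u \<noteq> 0" and d: "d \<noteq> 0" "u \<bullet> d = 0"
    and P: "P \<in> K" "P + d \<in> K"
    and x: "x1 \<in> frontier K" "x3 \<in> frontier K" "x1 \<noteq> x3" "u \<bullet> x1 = u \<bullet> P" "u \<bullet> x3 = u \<bullet> P"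
    and y: "y1 \<in> K" "y2 \<in> K" "u \<bullet> y1 > u \<bullet> P" "u \<bullet> y2 < u \<bullet> P"
  shows "norm d \<le> dist x1 x3"
proof (rule ccontr)
  assume close: "\<not> norm d \<le> dist x1 x3"
  have fK: "frontier K \<subseteq> K" using frontier_subset_closed[OF K(2)] .
  have on_line: "x = P + ((x - P) \<bullet> d / (d \<bullet> d)) *\<^sub>R d" if "u \<bullet> x = u \<bullet> P" for x
  proof -
    have "u \<bullet> (x - P) = 0" using that by (simp add: inner_diff_right)
    then have "(x - P) \<bullet> u = 0" by (simp add: inner_commute)
    moreover have "d \<bullet> u = 0" using d(2) by (simp add: inner_commute)
    ultimately have "x - P = ((x - P) \<bullet> d / (d \<bullet> d)) *\<^sub>R d"
      using orthogonal_2_parallel[OF d(1) u] by blast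
    then show ?thesis by (simp add: algebra_simps)
  qed
  obtain s1 s3 where s: "x1 = P + s1 *\<^sub>R d" "x3 = P + s3 *\<^sub>R d"
    using on_line x(4,5) by blast
  have "dist x1 x3 = \<bar>s1 - s3\<bar> * norm d" unfolding s dist_norm
    by (metis add_diff_cancel_left norm_scaleR real_norm_def scaleR_left_diff_distrib)
  then have "\<bar>s1 - s3\<bar> < 1" using close d(1) by simp
  moreover have "s1 \<noteq> s3" using x(3) s by auto
  moreover have False if "\<bar>t1 - t3\<bar> < 1" "t1 < t3" "P + t1 *\<^sub>R d \<in> frontier K" "P + t3 *\<^sub>R d \<in> frontier K"
    for t1 t3
  proof (cases "0 < t1")
    case True
    have "P + 0 *\<^sub>R d \<in> K" "P + t3 *\<^sub>R d \<in> K" using P that(4) fK by auto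
    then show False using frontier_not_crossing_chord[OF K(1,3) u d that(3) _ _ True that(2) y] by blast
  next
    case False
    have "P + t1 *\<^sub>R d \<in> K" "P + 1 *\<^sub>R d \<in> K" using P that(3) fK by auto
    moreover have "t3 < 1" using False that(1) by linarith
    ultimately show False using frontier_not_crossing_chord[OF K(1,3) u d that(4) _ _ that(2) _ y] by blast
  qed
  ultimately show False using x(1,2) s by (metis abs_minus_commute linorder_neqE_linordered_idom)
qed

lemma bottom_chord_not_shorter:
  fixes u a b a' b' :: "real^2"
  assumes sc: "simple_closed_curve \<Gamma>"
    and csc: "\<And>S. S \<subseteq> \<Gamma> \<Longrightarrow> finite S \<Longrightarrow> card S = 6 \<Longrightarrow> csc_position S"
    and u: "u \<noteq> 0" and sub: "\<Gamma> \<subseteq> {x. m \<le> u \<bullet> x \<and> u \<bullet> x \<le> M}" and mM: "m < M"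
    and T: "{x. u \<bullet> x = M} \<inter> \<Gamma> = closed_segment a b"
    and B: "{x. u \<bullet> x = m} \<inter> \<Gamma> = closed_segment a' b'"
  shows "dist a b \<le> dist a' b'"
proof (rule ccontr)
  assume "\<not> dist a b \<le> dist a' b'"
  then have e: "(dist a b - dist a' b') / 3 > 0" and ab: "a \<noteq> b" by auto
  have aT: "a \<in> \<Gamma>" "u \<bullet> a = M" "b \<in> \<Gamma>" "u \<bullet> b = M" using T by auto
  have a'B: "a' \<in> \<Gamma>" "u \<bullet> a' = m" using B by auto
  obtain \<delta> x1 x3 where X: "m < \<delta>" "\<delta> < M" "x1 \<in> \<Gamma>" "x3 \<in> \<Gamma>" "x1 \<noteq> x3" "u \<bullet> x1 = \<delta>" "u \<bullet> x3 = \<delta>"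
      "dist x1 x3 < dist a' b' + 2 * ((dist a b - dist a' b') / 3)"
    using curve_crosses_level_near_bottom_chord[OF sc sub mM aT(1,2) B e] by blast
  define mid where "mid = (1 - 1/2) *\<^sub>R a + (1/2::real) *\<^sub>R b"
  have "mid \<in> closed_segment a b" unfolding mid_def closed_segment_def
    by (rule CollectI, rule exI[of _ "1/2"]) simp
  then have midG: "mid \<in> \<Gamma>" "u \<bullet> mid = M" using T by blast+
  have "{a, b, mid, a', x1, x3} \<subseteq> \<Gamma>" using aT midG a'B X by simp
  moreover have "card {a, b, mid, a', x1, x3} \<le> 6" using card_length[of "[a, b, mid, a', x1, x3]"] by simp
  ultimately obtain K where K: "cs_convex_body K" "{a, b, mid, a', x1, x3} \<subseteq> frontier K"
    using csc_position_small_subset[OF sc csc] by blast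
  note KC = cs_convex_body_convex_closed[OF K(1)]
  have inK: "a \<in> K" "b \<in> K" "a' \<in> K" using K(2) frontier_subset_closed[OF KC(2)] by blast+
  have "(\<forall>y\<in>K. u \<bullet> y \<le> u \<bullet> mid) \<or> (\<forall>y\<in>K. u \<bullet> y \<ge> u \<bullet> mid)"
    by (rule frontier_open_chord_supporting[OF KC(1,3) _ inK(1,2) mid_def _ _ u _ ab])
       (use K(2) aT in auto)
  then have "\<forall>y\<in>K. u \<bullet> y \<le> M" using inK(3) a'B(2) midG(2) mM by force
  then obtain P where P: "u \<bullet> P = \<delta>" "P \<in> K" "P + (b - a) \<in> K"
    using cs_convex_body_chord_translate[OF K(1) inK aT(2,4)] a'B(2) X(1,2) by blast
  have "b - a \<noteq> 0" "u \<bullet> (b - a) = 0" using ab aT by (auto simp: inner_diff_right)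
  then have "norm (b - a) \<le> dist x1 x3"
    by (rule frontier_points_on_chord_far_apart[OF KC u _ _ P(2,3) _ _ X(5) _ _ inK(1,3)])
       (use K(2) X P aT a'B in auto)
  moreover have "dist a' b' + 2 * ((dist a b - dist a' b') / 3) < dist a b" using e by (simp add: field_simps)
  then have "dist x1 x3 < dist a b" using X(8) by linarith
  ultimately show False by (simp add: dist_norm norm_minus_commute)
qed

lemma slab_chords_equal_length:
  fixes u :: "real^2"
  assumes sc: "simple_closed_curve \<Gamma>"
    and csc: "\<And>S. S \<subseteq> \<Gamma> \<Longrightarrow> finite S \<Longrightarrow> card S = 6 \<Longrightarrow> csc_position S"
    and u: "u \<noteq> 0" and mM: "m < M" and sub: "\<Gamma> \<subseteq> {x. m \<le> u \<bullet> x \<and> u \<bullet> x \<le> M}"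
    and nT: "{x. u \<bullet> x = M} \<inter> \<Gamma> \<noteq> {}" and nB: "{x. u \<bullet> x = m} \<inter> \<Gamma> \<noteq> {}"
  shows "\<exists>a b a' b'. {x. u \<bullet> x = M} \<inter> \<Gamma> = closed_segment a b \<and> {x. u \<bullet> x = m} \<inter> \<Gamma> = closed_segment a' b'
           \<and> dist a b = dist a' b'"
proof -
  have flip: "{x. (-u) \<bullet> x = - c} = {x. u \<bullet> x = c}" for c by auto
  have "\<Gamma> \<subseteq> {x. u \<bullet> x \<le> M}" "\<Gamma> \<subseteq> {x. (-u) \<bullet> x \<le> -m}" "-u \<noteq> 0" using sub u by auto
  obtain a b where T: "{x. u \<bullet> x = M} \<inter> \<Gamma> = closed_segment a b"
    using supporting_line_inter_curve_segment[OF sc csc u \<open>\<Gamma> \<subseteq> {x. u \<bullet> x \<le> M}\<close> nT] by blast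
  obtain a' b' where B: "{x. u \<bullet> x = m} \<inter> \<Gamma> = closed_segment a' b'"
    using supporting_line_inter_curve_segment[OF sc csc \<open>-u \<noteq> 0\<close> \<open>\<Gamma> \<subseteq> {x. (-u) \<bullet> x \<le> -m}\<close>] nB
    unfolding flip by blast
  have "dist a b \<le> dist a' b'" by (rule bottom_chord_not_shorter[OF sc csc u sub mM T B])
  moreover have "dist a' b' \<le> dist a b"
    by (rule bottom_chord_not_shorter[OF sc csc, of "-u" "-M" "-m"]) (use u mM sub T B flip in auto)
  ultimately show ?thesis using T B by auto
qed

lemma supporting_line_halfplane:
  fixes u :: "real^2"
  assumes "supporting_line \<Gamma> L" and L: "L = {x. u \<bullet> x = c}"
  shows "\<Gamma> \<subseteq> {x. u \<bullet> x \<le> c} \<or> \<Gamma> \<subseteq> {x. u \<bullet> x \<ge> c}"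
proof -
  obtain v e where v: "L = {x. v \<bullet> x = e}" "\<Gamma> \<subseteq> {x. v \<bullet> x \<le> e}"
  proof -
    obtain u1 c1 where "L = {x. u1 \<bullet> x = c1}" "\<Gamma> \<subseteq> {x. u1 \<bullet> x \<le> c1} \<or> \<Gamma> \<subseteq> {x. u1 \<bullet> x \<ge> c1}"
      using assms(1) unfolding supporting_line_def by blast
    then show ?thesis using that[of u1 c1] that[of "-u1" "-c1"] by force
  qed
  show ?thesis
  proof (rule ccontr)
    assume "\<not> ?thesis"
    then obtain y z where yz: "y \<in> \<Gamma>" "z \<in> \<Gamma>" "u \<bullet> y > c" "u \<bullet> z < c" by force
    define \<theta> where "\<theta> = (c - u \<bullet> z) / (u \<bullet> y - u \<bullet> z)"
    have l: "0 < \<theta>" "\<theta> < 1" using yz unfolding \<theta>_def by (auto simp: field_simps)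
    define w where "w = \<theta> *\<^sub>R y + (1 - \<theta>) *\<^sub>R z"
    have "u \<bullet> w = u \<bullet> z + \<theta> * (u \<bullet> y - u \<bullet> z)" unfolding w_def by (simp add: inner_add_right algebra_simps)
    also have "\<dots> = c" using yz unfolding \<theta>_def by simp
    finally have "v \<bullet> w = e" using L v(1) by blast
    then have "e = \<theta> * (v \<bullet> y) + (1 - \<theta>) * (v \<bullet> z) + 0 * e" unfolding w_def by (simp add: inner_add_right)
    moreover have "v \<bullet> y \<le> e" "v \<bullet> z \<le> e" using yz(1,2) v(2) by auto
    ultimately have "v \<bullet> y = e" using convex_comb_eq_max[of \<theta> "1 - \<theta>" 0 e "v \<bullet> y" "v \<bullet> z" e] l by simp
    then have "y \<in> L" using v(1) by blast
    then show False using L yz(3) by simp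
  qed
qed

lemma parallel_supporting_lines_slab:
  assumes "supporting_line \<Gamma> L" "supporting_line \<Gamma> L'" "parallel_lines L L'" "L \<noteq> L'"
  obtains u m M where "u \<noteq> (0::real^2)" "m < M" "\<Gamma> \<subseteq> {x. m \<le> u \<bullet> x \<and> u \<bullet> x \<le> M}"
    "L = {x. u \<bullet> x = M}" "L' = {x. u \<bullet> x = m}"
proof -
  obtain u c c' where u: "u \<noteq> 0" "L = {x. u \<bullet> x = c}" "L' = {x. u \<bullet> x = c'}"
    using assms(3) unfolding parallel_lines_def by blast
  have "c \<noteq> c'" using u assms(4) by auto
  obtain y y' where y: "y \<in> \<Gamma>" "u \<bullet> y = c" "y' \<in> \<Gamma>" "u \<bullet> y' = c'"
    using assms(1,2) u unfolding supporting_line_def by blast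
  have flip: "{x. (-u) \<bullet> x = - k} = {x. u \<bullet> x = k}" for k by auto
  consider "\<Gamma> \<subseteq> {x. u \<bullet> x \<le> c}" "\<Gamma> \<subseteq> {x. u \<bullet> x \<ge> c'}"
    | "\<Gamma> \<subseteq> {x. u \<bullet> x \<ge> c}" "\<Gamma> \<subseteq> {x. u \<bullet> x \<le> c'}"
    | "\<Gamma> \<subseteq> {x. u \<bullet> x \<le> c}" "\<Gamma> \<subseteq> {x. u \<bullet> x \<le> c'}"
    | "\<Gamma> \<subseteq> {x. u \<bullet> x \<ge> c}" "\<Gamma> \<subseteq> {x. u \<bullet> x \<ge> c'}"
    using supporting_line_halfplane[OF assms(1) u(2)] supporting_line_halfplane[OF assms(2) u(3)] by blast
  then show ?thesis
  proof cases
    case 1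
    then have "c' < c" using y \<open>c \<noteq> c'\<close> by force
    show ?thesis by (rule that[of u c' c]) (use 1 u \<open>c' < c\<close> in auto)
  next
    case 2
    then have "c < c'" using y \<open>c \<noteq> c'\<close> by force
    show ?thesis by (rule that[of "-u" "-c'" "-c"]) (use 2 u \<open>c < c'\<close> in \<open>auto simp: flip\<close>)
  next
    case 3
    then show ?thesis using y \<open>c \<noteq> c'\<close> by force
  next
    case 4
    then show ?thesis using y \<open>c \<noteq> c'\<close> by force
  qed
qed

theorem mainTheorem8:
  fixes \<Gamma> L L' :: "(real^2) set"
  assumes "simple_closed_curve \<Gamma>"
    and "\<And>S. S \<subseteq> \<Gamma> \<Longrightarrow> finite S \<Longrightarrow> card S = 6 \<Longrightarrow> csc_position S"
    and "supporting_line \<Gamma> L" and "supporting_line \<Gamma> L'"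
    and "parallel_lines L L'" and "L \<noteq> L'"
  shows "\<exists>a b a' b'. L \<inter> \<Gamma> = closed_segment a b \<and> L' \<inter> \<Gamma> = closed_segment a' b'
           \<and> dist a b = dist a' b'"
proof -
  obtain u m M where slab: "u \<noteq> 0" "m < M" "\<Gamma> \<subseteq> {x. m \<le> u \<bullet> x \<and> u \<bullet> x \<le> M}"
    and L: "L = {x. u \<bullet> x = M}" "L' = {x. u \<bullet> x = m}"
    using parallel_supporting_lines_slab[OF assms(3-6)] by blast
  have "L \<inter> \<Gamma> \<noteq> {}" "L' \<inter> \<Gamma> \<noteq> {}" using assms(3,4) unfolding supporting_line_def by auto
  then show ?thesis using slab_chords_equal_length[OF assms(1,2) slab] unfolding L by blast
qed

end
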